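(* Let $R_1,R_2$ be non-negatively graded commutative rings with unity, $\psi\colon R_1\to R_2$ a homomorphism, and for $i=1,2$ let $M_i$ be a non-negatively graded $R_i$-algebra. Assume that (1) $M_1$ is a free $R_1$-module, (2) $M_2\cong R_2\otimes_{R_1}M_1$, with $\psi^*\colon M_1\to M_2$ the induced map $m\mapsto 1\otimes m$, and (3) $\psi$ induces an isomorphism $R_1/R_1^+\cong R_2/R_2^+$ of $R_1$-modules, where $R_i^+$ denotes the submodule of elements of positive degree. Let $\{g_\lambda\}_{\lambda\in\Lambda}$ be $R_2$-algebra generators of $M_2$. Then any elements $\tilde g_\lambda\in M_1$ with $\psi^*(\tilde g_\lambda)=g_\lambda$ for all $\lambda$ form a set of $R_1$-algebra generators of $M_1$. *)

theory Defs
  imports Main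
begin

definition graded :: "(nat \<Rightarrow> 'a::ring_1 set) \<Rightarrow> bool" where
  "graded G \<longleftrightarrow>
     (\<forall>n. 0 \<in> G n \<and> (\<forall>x\<in>G n. \<forall>y\<in>G n. x + y \<in> G n \<and> - x \<in> G n)) \<and>
     1 \<in> G 0 \<and>
     (\<forall>i j. \<forall>x\<in>G i. \<forall>y\<in>G j. x * y \<in> G (i + j)) \<and>
     (\<forall>x. \<exists>f N. (\<forall>n. f n \<in> G n) \<and> x = (\<Sum>n<N. f n)) \<and>
     (\<forall>f N. (\<forall>n. f n \<in> G n) \<and> (\<Sum>n<N. f n) = 0 \<longrightarrow> (\<forall>n<N. f n = 0))"

definition homogeneous :: "(nat \<Rightarrow> 'a set) \<Rightarrow> 'a \<Rightarrow> bool" where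
  "homogeneous G x \<longleftrightarrow> (\<exists>n. x \<in> G n)"

definition rhom :: "('a::ring_1 \<Rightarrow> 'b::ring_1) \<Rightarrow> bool" where
  "rhom f \<longleftrightarrow> f 1 = 1 \<and> (\<forall>a b. f (a + b) = f a + f b \<and> f (a * b) = f a * f b)"

definition graded_algebra ::
  "(nat \<Rightarrow> 'r::comm_ring_1 set) \<Rightarrow> ('r \<Rightarrow> 'm::ring_1) \<Rightarrow> (nat \<Rightarrow> 'm set) \<Rightarrow> bool" where
  "graded_algebra G \<phi> H \<longleftrightarrow> graded G \<and> graded H \<and> rhom \<phi> \<and>
     (\<forall>r m. \<phi> r * m = m * \<phi> r) \<and> (\<forall>n. \<phi> ` G n \<subseteq> H n)"

text \<open>M is a free R-module (scalar action r.m = phi r * m): it has a basis.\<close>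
definition free_module :: "('r::comm_ring_1 \<Rightarrow> 'm::ring_1) \<Rightarrow> bool" where
  "free_module \<phi> \<longleftrightarrow> (\<exists>B.
     (\<forall>m. \<exists>S c. finite S \<and> S \<subseteq> B \<and> m = (\<Sum>b\<in>S. \<phi> (c b) * b)) \<and>
     (\<forall>S c. finite S \<and> S \<subseteq> B \<and> (\<Sum>b\<in>S. \<phi> (c b) * b) = 0 \<longrightarrow> (\<forall>b\<in>S. c b = 0)))"

definition delta :: "'a \<Rightarrow> 'a \<Rightarrow> int" where
  "delta p q = (if q = p then 1 else 0)"

text \<open>The subgroup of the free abelian group on R2 x M1 (finitely supported
integer-valued functions) generated by the defining relations of the tensor
product R2 (x)_{R1} M1, where R1 acts on R2 via psi and on M1 via phi1.\<close>
inductive_set tensor_zero ::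
  "('r1::comm_ring_1 \<Rightarrow> 'r2::comm_ring_1) \<Rightarrow> ('r1 \<Rightarrow> 'm1::ring_1) \<Rightarrow> ('r2 \<times> 'm1 \<Rightarrow> int) set"
  for \<psi> \<phi>1 where
  zero: "(\<lambda>q. 0) \<in> tensor_zero \<psi> \<phi>1"
| diff: "f \<in> tensor_zero \<psi> \<phi>1 \<Longrightarrow> g \<in> tensor_zero \<psi> \<phi>1 \<Longrightarrow> (\<lambda>q. f q - g q) \<in> tensor_zero \<psi> \<phi>1"
| add_left: "(\<lambda>q. delta (r + r', m) q - delta (r, m) q - delta (r', m) q) \<in> tensor_zero \<psi> \<phi>1"
| add_right: "(\<lambda>q. delta (r, m + m') q - delta (r, m) q - delta (r, m') q) \<in> tensor_zero \<psi> \<phi>1"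
| scalar: "(\<lambda>q. delta (r * \<psi> s, m) q - delta (r, \<phi>1 s * m) q) \<in> tensor_zero \<psi> \<phi>1"

text \<open>psis : M1 \<rightarrow> M2 is a ring homomorphism, R1-linear over psi, and the induced
map R2 (x)_{R1} M1 \<rightarrow> M2, r (x) m \<mapsto> phi2 r * psis m, is bijective
(i.e. M2 \<cong> R2 (x)_{R1} M1 with psis corresponding to m \<mapsto> 1 (x) m).\<close>
definition base_change ::
  "('r1::comm_ring_1 \<Rightarrow> 'r2::comm_ring_1) \<Rightarrow> ('r1 \<Rightarrow> 'm1::ring_1) \<Rightarrow> ('r2 \<Rightarrow> 'm2::ring_1)
   \<Rightarrow> ('m1 \<Rightarrow> 'm2) \<Rightarrow> bool" where
  "base_change \<psi> \<phi>1 \<phi>2 \<psi>s \<longleftrightarrow> rhom \<psi>s \<and>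
     (\<forall>s m. \<psi>s (\<phi>1 s * m) = \<phi>2 (\<psi> s) * \<psi>s m) \<and>
     (\<forall>m2. \<exists>S. finite S \<and> m2 = (\<Sum>p\<in>S. \<phi>2 (fst p) * \<psi>s (snd p))) \<and>
     (\<forall>f. finite {q. f q \<noteq> 0} \<and>
          (\<Sum>q\<in>{q. f q \<noteq> 0}. of_int (f q) * (\<phi>2 (fst q) * \<psi>s (snd q))) = 0
          \<longrightarrow> f \<in> tensor_zero \<psi> \<phi>1)"

definition pos_part :: "(nat \<Rightarrow> 'a::ring_1 set) \<Rightarrow> 'a set" where
  "pos_part G = {x. \<exists>f N. (\<forall>n. f n \<in> G n) \<and> f 0 = 0 \<and> x = (\<Sum>n<N. f n)}"

inductive_set alg_gen :: "('r \<Rightarrow> 'm::ring_1) \<Rightarrow> 'm set \<Rightarrow> 'm set" for \<phi> S where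
  scal: "\<phi> r \<in> alg_gen \<phi> S"
| gen: "x \<in> S \<Longrightarrow> x \<in> alg_gen \<phi> S"
| add: "x \<in> alg_gen \<phi> S \<Longrightarrow> y \<in> alg_gen \<phi> S \<Longrightarrow> x + y \<in> alg_gen \<phi> S"
| mult: "x \<in> alg_gen \<phi> S \<Longrightarrow> y \<in> alg_gen \<phi> S \<Longrightarrow> x * y \<in> alg_gen \<phi> S"

end

theory Submission
  imports Defs
begin

text \<open>Let \<open>A\<close> be the subalgebra of \<open>M\<^sub>1\<close> generated by the \<open>g\<^sub>\<lambda>\<close>-lifts. Since the \<open>g\<^sub>\<lambda>\<close> generate \<open>M\<^sub>2\<close>
  and \<open>R\<^sub>1 \<rightarrow> R\<^sub>2/R\<^sub>2\<^sup>+\<close> is onto, every \<open>\<psi>\<^sup>*(m)\<close> agrees with some \<open>\<psi>\<^sup>*(a)\<close>, \<open>a \<in> A\<close>, modulo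
  \<open>R\<^sub>2\<^sup>+M\<^sub>2\<close>. As \<open>M\<^sub>2 \<cong> R\<^sub>2 \<otimes>\<^bsub>R\<^sub>1\<^esub> M\<^sub>1\<close> and \<open>R\<^sub>1/R\<^sub>1\<^sup>+ \<cong> R\<^sub>2/R\<^sub>2\<^sup>+\<close>, the map \<open>\<psi>\<^sup>*\<close> induces an
  isomorphism \<open>M\<^sub>1/R\<^sub>1\<^sup>+M\<^sub>1 \<cong> M\<^sub>2/R\<^sub>2\<^sup>+M\<^sub>2\<close>, hence \<open>M\<^sub>1 = A + R\<^sub>1\<^sup>+M\<^sub>1\<close>. Because \<open>A\<close> is generated by
  homogeneous elements and the grading is non-negative, the graded Nakayama lemma (induction on
  degree) gives \<open>A = M\<^sub>1\<close>.\<close>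

text \<open>Elements are handled through lists of pairs (homogeneous component, its degree); degrees may
  repeat, and \<open>hcomponent L n\<close> collects the part of degree \<open>n\<close>.\<close>
definition homogeneous_list :: "(nat \<Rightarrow> 'a set) \<Rightarrow> ('a \<times> nat) list \<Rightarrow> bool" where
  "homogeneous_list G L \<longleftrightarrow> (\<forall>p\<in>set L. fst p \<in> G (snd p))"

abbreviation hsum :: "('a::monoid_add \<times> nat) list \<Rightarrow> 'a" where
  "hsum L \<equiv> sum_list (map fst L)"

abbreviation hcomponent :: "('a::monoid_add \<times> nat) list \<Rightarrow> nat \<Rightarrow> 'a" where
  "hcomponent L n \<equiv> hsum (filter (\<lambda>p. snd p = n) L)"

lemma homogeneous_list_simps [simp]:
  "homogeneous_list G []"
  "homogeneous_list G (p # L) \<longleftrightarrow> fst p \<in> G (snd p) \<and> homogeneous_list G L"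
  "homogeneous_list G (L1 @ L2) \<longleftrightarrow> homogeneous_list G L1 \<and> homogeneous_list G L2"
  by (auto simp: homogeneous_list_def)

lemma graded_zero: "graded G \<Longrightarrow> 0 \<in> G n"
  and graded_add: "graded G \<Longrightarrow> x \<in> G n \<Longrightarrow> y \<in> G n \<Longrightarrow> x + y \<in> G n"
  and graded_uminus: "graded G \<Longrightarrow> x \<in> G n \<Longrightarrow> - x \<in> G n"
  and graded_mult: "graded G \<Longrightarrow> x \<in> G i \<Longrightarrow> y \<in> G j \<Longrightarrow> x * y \<in> G (i + j)"
  by (simp_all add: graded_def)

lemma graded_sum_eq_0:
  assumes "graded G" "\<forall>n. f n \<in> G n" "(\<Sum>n<N. f n) = 0" "n < N"
  shows "f n = 0"
proof -
  have "\<forall>f N. (\<forall>n. f n \<in> G n) \<and> (\<Sum>n<N. f n) = 0 \<longrightarrow> (\<forall>n<N. f n = 0)"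
    using assms(1) unfolding graded_def by (elim conjE) assumption
  with assms(2-4) show ?thesis by blast
qed

lemma graded_decomposition:
  assumes "graded G"
  obtains L where "homogeneous_list G L" "x = hsum L"
proof -
  obtain f N where f: "\<forall>n. f n \<in> G n" "x = (\<Sum>n<N. f n)"
    using assms unfolding graded_def by (elim conjE) blast
  let ?L = "map (\<lambda>n. (f n, n)) [0..<N]"
  have "homogeneous_list G ?L" using f(1) by (auto simp: homogeneous_list_def)
  moreover have "hsum ?L = (\<Sum>n\<in>set [0..<N]. f n)"
    by (simp only: sum_set_upt_conv_sum_list_nat map_map o_def fst_conv)
  then have "x = hsum ?L" using f(2) by (simp add: atLeast0LessThan)
  ultimately show thesis by (rule that)
qed

lemma hcomponent_in:
  assumes "graded G" "homogeneous_list G L"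
  shows "hcomponent L n \<in> G n"
  using assms(2) by (induction L) (auto simp: graded_zero[OF assms(1)] graded_add[OF assms(1)])

lemma sum_hcomponent:
  assumes "\<forall>p\<in>set L. snd p < N"
  shows "(\<Sum>n<N. hcomponent L n) = hsum L"
  using assms
proof (induction L)
  case (Cons p L)
  have "(\<Sum>n<N. hcomponent (p # L) n)
      = (\<Sum>n<N. (if snd p = n then fst p else 0) + hcomponent L n)"
    by (rule sum.cong) auto
  also have "\<dots> = (\<Sum>n<N. if snd p = n then fst p else 0) + (\<Sum>n<N. hcomponent L n)"
    by (rule sum.distrib)
  finally show ?case using Cons by simp
qed simp

lemma degree_bound: "\<forall>p\<in>set L. snd p < Suc (sum_list (map snd L))"
  using member_le_sum_list[of _ "map snd L"] by (simp add: le_imp_less_Suc)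

lemma hcomponent_eq_0:
  assumes "graded G" "homogeneous_list G L" "hsum L = 0"
  shows "hcomponent L n = 0"
proof (cases "n < Suc (sum_list (map snd L))")
  case True
  show ?thesis
    by (rule graded_sum_eq_0[OF assms(1), of "hcomponent L"])
      (use hcomponent_in[OF assms(1,2)] sum_hcomponent[OF degree_bound[of L]] assms(3) True in auto)
next
  case False
  then have "filter (\<lambda>p. snd p = n) L = []"
    using degree_bound[of L] by (auto simp: filter_empty_conv)
  then show ?thesis by simp
qed

lemma homogeneous_eq_hcomponent:
  assumes "graded G" "homogeneous_list G L" "x \<in> G n" "x = hsum L"
  shows "x = hcomponent L n"
proof -
  have "hcomponent ((- x, n) # L) n = 0"
    by (rule hcomponent_eq_0[OF assms(1)]) (use assms graded_uminus in auto)
  then show ?thesis by (simp add: neg_eq_iff_add_eq_0 eq_neg_iff_add_eq_0 add_eq_0_iff2)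
qed

definition hprod :: "('a::times \<times> nat) list \<Rightarrow> ('a \<times> nat) list \<Rightarrow> ('a \<times> nat) list" where
  "hprod L1 L2 = concat (map (\<lambda>p. map (\<lambda>q. (fst p * fst q, snd p + snd q)) L2) L1)"

lemma hsum_hprod: "hsum (hprod L1 L2) = hsum L1 * (hsum L2 :: 'a::ring_1)"
  by (induction L1)
    (auto simp: hprod_def distrib_right o_def sum_list_addf simp flip: sum_list_const_mult)

lemma homogeneous_list_hprod:
  "graded G \<Longrightarrow> homogeneous_list G L1 \<Longrightarrow> homogeneous_list G L2 \<Longrightarrow> homogeneous_list G (hprod L1 L2)"
  by (auto simp: hprod_def homogeneous_list_def graded_mult)

lemma set_hprod: "set (hprod L1 L2) = (\<lambda>(p, q). (fst p * fst q, snd p + snd q)) ` (set L1 \<times> set L2)"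
  by (auto simp: hprod_def)

lemma pos_part_iff:
  assumes "graded G"
  shows "x \<in> pos_part G \<longleftrightarrow> (\<exists>L. homogeneous_list G L \<and> (\<forall>p\<in>set L. 0 < snd p) \<and> x = hsum L)"
proof
  assume "x \<in> pos_part G"
  then obtain f N where f: "\<forall>n. f n \<in> G n" "f 0 = 0" "x = (\<Sum>n<N. f n)"
    unfolding pos_part_def by blast
  let ?L = "map (\<lambda>n. (f n, n)) [1..<N]"
  have "hsum ?L = (\<Sum>n\<in>{1..<N}. f n)"
    by (simp add: o_def flip: sum_set_upt_conv_sum_list_nat)
  also have "\<dots> = x"
    using f(2,3) by (cases N) (simp_all add: lessThan_atLeast0 sum.atLeast_Suc_lessThan)
  finally show "\<exists>L. homogeneous_list G L \<and> (\<forall>p\<in>set L. 0 < snd p) \<and> x = hsum L"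
    using f(1) by (intro exI[of _ ?L]) (auto simp: homogeneous_list_def)
next
  assume "\<exists>L. homogeneous_list G L \<and> (\<forall>p\<in>set L. 0 < snd p) \<and> x = hsum L"
  then obtain L where L: "homogeneous_list G L" "\<forall>p\<in>set L. 0 < snd p" "x = hsum L"
    by blast
  have "filter (\<lambda>p. snd p = 0) L = []" using L(2) by (auto simp: filter_empty_conv)
  then show "x \<in> pos_part G"
    unfolding pos_part_def
    using hcomponent_in[OF assms L(1)] sum_hcomponent[OF degree_bound[of L]] L(3)
    by (intro CollectI exI[of _ "hcomponent L"] exI[of _ "Suc (sum_list (map snd L))"]) auto
qed

lemma pos_partI:
  "graded G \<Longrightarrow> homogeneous_list G L \<Longrightarrow> \<forall>p\<in>set L. 0 < snd p \<Longrightarrow> hsum L \<in> pos_part G"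
  by (auto simp: pos_part_iff)

lemma pos_partE:
  assumes "graded G" "x \<in> pos_part G"
  obtains L where "homogeneous_list G L" "\<forall>p\<in>set L. 0 < snd p" "x = hsum L"
  using assms by (auto simp: pos_part_iff)

lemma pos_part_add:
  assumes "graded G" "x \<in> pos_part G" "y \<in> pos_part G"
  shows "x + y \<in> pos_part G"
proof -
  obtain L1 L2 where "homogeneous_list G L1" "\<forall>p\<in>set L1. 0 < snd p" "x = hsum L1"
    and "homogeneous_list G L2" "\<forall>p\<in>set L2. 0 < snd p" "y = hsum L2"
    using pos_partE[OF assms(1)] assms(2,3) by metis
  then show ?thesis using pos_partI[OF assms(1), of "L1 @ L2"] by auto
qed

lemma pos_part_uminus:
  assumes "graded G" "x \<in> pos_part G"
  shows "- x \<in> pos_part G"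
proof -
  obtain L where L: "homogeneous_list G L" "\<forall>p\<in>set L. 0 < snd p" "x = hsum L"
    using pos_partE[OF assms] .
  let ?L = "map (\<lambda>p. (- fst p, snd p)) L"
  have "hsum ?L = - x" unfolding L(3) by (induction L) auto
  moreover have "hsum ?L \<in> pos_part G"
    using L(1,2) by (intro pos_partI[OF assms(1)]) (auto simp: homogeneous_list_def graded_uminus[OF assms(1)])
  ultimately show ?thesis by simp
qed

lemma pos_part_diff:
  "graded G \<Longrightarrow> x \<in> pos_part G \<Longrightarrow> y \<in> pos_part G \<Longrightarrow> x - y \<in> pos_part G"
  using pos_part_add[of G x "- y"] pos_part_uminus[of G y] by simp

lemma pos_part_mult:
  assumes "graded G" "x \<in> pos_part G"
  shows "r * x \<in> pos_part G"
proof -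
  obtain L where L: "homogeneous_list G L" "\<forall>p\<in>set L. 0 < snd p" "x = hsum L"
    using pos_partE[OF assms] .
  obtain Lr where Lr: "homogeneous_list G Lr" "r = hsum Lr"
    using graded_decomposition[OF assms(1)] .
  have "hsum (hprod Lr L) \<in> pos_part G"
    using L(2) by (intro pos_partI[OF assms(1)] homogeneous_list_hprod[OF assms(1) Lr(1) L(1)])
      (auto simp: set_hprod)
  then show ?thesis by (simp add: hsum_hprod L(3) Lr(2))
qed

lemma rhom_add: "rhom f \<Longrightarrow> f (a + b) = f a + f b"
  and rhom_mult: "rhom f \<Longrightarrow> f (a * b) = f a * f b"
  and rhom_one: "rhom f \<Longrightarrow> f 1 = 1"
  by (simp_all add: rhom_def)

lemma rhom_zero: "rhom f \<Longrightarrow> f 0 = 0"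
  using rhom_add[of f 0 0] by simp

lemma rhom_uminus: "rhom f \<Longrightarrow> f (- a) = - f a"
  using rhom_add[of f "- a" a] rhom_zero[of f] by (simp add: eq_neg_iff_add_eq_0)

lemma rhom_diff: "rhom f \<Longrightarrow> f (a - b) = f a - f b"
  using rhom_add[of f a "- b"] rhom_uminus[of f b] by simp

lemma rhom_sum_list: "rhom f \<Longrightarrow> f (\<Sum>x\<leftarrow>xs. h x) = (\<Sum>x\<leftarrow>xs. f (h x))"
  by (induction xs) (auto simp: rhom_zero rhom_add)

inductive_set pos_span :: "(nat \<Rightarrow> 'r::ring_1 set) \<Rightarrow> ('r \<Rightarrow> 'm::ring_1) \<Rightarrow> 'm set"
  for G \<phi> where
  zero: "0 \<in> pos_span G \<phi>"
| add: "r \<in> pos_part G \<Longrightarrow> x \<in> pos_span G \<phi> \<Longrightarrow> \<phi> r * m + x \<in> pos_span G \<phi>"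

lemma pos_span_scaled: "r \<in> pos_part G \<Longrightarrow> \<phi> r * m \<in> pos_span G \<phi>"
  using pos_span.add[OF _ pos_span.zero] by fastforce

lemma pos_span_add: "x \<in> pos_span G \<phi> \<Longrightarrow> y \<in> pos_span G \<phi> \<Longrightarrow> x + y \<in> pos_span G \<phi>"
  by (induction x rule: pos_span.induct) (auto simp: add.assoc intro: pos_span.add)

lemma pos_span_uminus:
  assumes "graded G" "rhom \<phi>" "x \<in> pos_span G \<phi>"
  shows "- x \<in> pos_span G \<phi>"
  using assms(3)
proof (induction x rule: pos_span.induct)
  case (add r x m)
  have "- (\<phi> r * m + x) = \<phi> (- r) * m + - x" by (simp add: rhom_uminus[OF assms(2)])
  then show ?case using add pos_part_uminus[OF assms(1)] by (metis pos_span.add)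
qed (simp add: pos_span.zero)

lemma pos_span_diff:
  "graded G \<Longrightarrow> rhom \<phi> \<Longrightarrow> x \<in> pos_span G \<phi> \<Longrightarrow> y \<in> pos_span G \<phi> \<Longrightarrow> x - y \<in> pos_span G \<phi>"
  using pos_span_add[of x G \<phi> "- y"] pos_span_uminus[of G \<phi> y] by simp

lemma pos_span_mult_right: "x \<in> pos_span G \<phi> \<Longrightarrow> x * w \<in> pos_span G \<phi>"
  by (induction x rule: pos_span.induct)
    (auto simp: distrib_right mult.assoc intro: pos_span.intros)

lemma pos_span_mult_left:
  assumes "\<And>r m. \<phi> r * m = m * \<phi> r" "x \<in> pos_span G \<phi>"
  shows "w * x \<in> pos_span G \<phi>"
  using assms(2)
proof (induction x rule: pos_span.induct)
  case (add r x m)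
  have "w * (\<phi> r * m + x) = \<phi> r * (w * m) + w * x"
    by (simp add: distrib_left assms(1) mult.assoc)
  then show ?case using add by (simp add: pos_span.add)
qed (simp add: pos_span.zero)

lemma graded_algebraD:
  assumes "graded_algebra G \<phi> H"
  shows "graded G" "graded H" "rhom \<phi>" "\<phi> r * m = m * \<phi> r" "\<phi> ` G n \<subseteq> H n"
  using assms by (simp_all add: graded_algebra_def)

lemma alg_gen_zero: "rhom \<phi> \<Longrightarrow> 0 \<in> alg_gen \<phi> S"
  using alg_gen.scal[of \<phi> 0 S] by (simp add: rhom_zero)

lemma alg_gen_sum_list:
  "rhom \<phi> \<Longrightarrow> \<forall>x\<in>set xs. x \<in> alg_gen \<phi> S \<Longrightarrow> sum_list xs \<in> alg_gen \<phi> S"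
  by (induction xs) (auto intro: alg_gen.add alg_gen_zero)

lemma alg_gen_homogeneous_decomposition:
  assumes alg: "graded_algebra G \<phi> H" and hom: "\<forall>s\<in>S. homogeneous H s"
    and "a \<in> alg_gen \<phi> S"
  shows "\<exists>L. homogeneous_list H L \<and> a = hsum L \<and> (\<forall>p\<in>set L. fst p \<in> alg_gen \<phi> S)"
  using assms(3)
proof (induction rule: alg_gen.induct)
  case (scal r)
  obtain L where L: "homogeneous_list G L" "r = hsum L"
    using graded_decomposition[OF graded_algebraD(1)[OF alg]] .
  let ?L = "map (\<lambda>p. (\<phi> (fst p), snd p)) L"
  have "\<phi> r = hsum ?L" by (simp add: L(2) rhom_sum_list[OF graded_algebraD(3)[OF alg]] o_def)
  moreover have "homogeneous_list H ?L"
    using L(1) graded_algebraD(5)[OF alg] by (auto simp: homogeneous_list_def)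
  ultimately show ?case by (intro exI[of _ ?L]) (auto intro: alg_gen.scal)
next
  case (gen x)
  then obtain d where "x \<in> H d" using hom by (auto simp: homogeneous_def)
  with gen show ?case by (intro exI[of _ "[(x, d)]"]) (auto intro: alg_gen.gen)
next
  case (add x y)
  then obtain L1 L2 where "homogeneous_list H L1" "x = hsum L1" "\<forall>p\<in>set L1. fst p \<in> alg_gen \<phi> S"
    and "homogeneous_list H L2" "y = hsum L2" "\<forall>p\<in>set L2. fst p \<in> alg_gen \<phi> S"
    by blast
  then show ?case by (intro exI[of _ "L1 @ L2"]) auto
next
  case (mult x y)
  then obtain L1 L2 where "homogeneous_list H L1" "x = hsum L1" "\<forall>p\<in>set L1. fst p \<in> alg_gen \<phi> S"
    and "homogeneous_list H L2" "y = hsum L2" "\<forall>p\<in>set L2. fst p \<in> alg_gen \<phi> S"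
    by blast
  then show ?case
    by (intro exI[of _ "hprod L1 L2"])
      (auto simp: hsum_hprod set_hprod intro: homogeneous_list_hprod[OF graded_algebraD(2)[OF alg]] alg_gen.mult)
qed

lemma pos_span_homogeneous_decomposition:
  assumes alg: "graded_algebra G \<phi> H" and "x \<in> pos_span G \<phi>"
  shows "\<exists>L. homogeneous_list H L \<and> x = hsum L \<and>
    (\<forall>p\<in>set L. \<exists>r m e. fst p = \<phi> r * m \<and> m \<in> H e \<and> e < snd p)"
  using assms(2)
proof (induction rule: pos_span.induct)
  case (add r x m)
  then obtain L where L: "homogeneous_list H L" "x = hsum L"
    "\<forall>p\<in>set L. \<exists>r m e. fst p = \<phi> r * m \<and> m \<in> H e \<and> e < snd p"
    by blast
  obtain Lr where Lr: "homogeneous_list G Lr" "\<forall>p\<in>set Lr. 0 < snd p" "r = hsum Lr"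
    using pos_partE[OF graded_algebraD(1)[OF alg] add.hyps(1)] .
  obtain Lm where Lm: "homogeneous_list H Lm" "m = hsum Lm"
    using graded_decomposition[OF graded_algebraD(2)[OF alg]] .
  let ?Lr = "map (\<lambda>p. (\<phi> (fst p), snd p)) Lr"
  have "\<phi> r = hsum ?Lr" by (simp add: Lr(3) rhom_sum_list[OF graded_algebraD(3)[OF alg]] o_def)
  moreover have "homogeneous_list H ?Lr"
    using Lr(1) graded_algebraD(5)[OF alg] by (auto simp: homogeneous_list_def)
  moreover have "\<forall>p\<in>set (hprod ?Lr Lm). \<exists>r m e. fst p = \<phi> r * m \<and> m \<in> H e \<and> e < snd p"
    using Lr(2) Lm(1) by (fastforce simp: set_hprod homogeneous_list_def)
  ultimately show ?case using L Lm
    by (intro exI[of _ "hprod ?Lr Lm @ L"])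
      (auto simp: hsum_hprod intro: homogeneous_list_hprod[OF graded_algebraD(2)[OF alg]])
qed (intro exI[of _ "[]"], simp)

theorem graded_nakayama:
  assumes alg: "graded_algebra G \<phi> H" and hom: "\<forall>s\<in>S. homogeneous H s"
    and approx: "\<And>m. \<exists>a\<in>alg_gen \<phi> S. m - a \<in> pos_span G \<phi>"
  shows "alg_gen \<phi> S = UNIV"
proof -
  note gH = graded_algebraD(2)[OF alg] and h = graded_algebraD(3)[OF alg]
  have homogeneous_in: "H n \<subseteq> alg_gen \<phi> S" for n
  proof (induction n rule: less_induct)
    case (less n)
    show ?case
    proof
      fix m assume m: "m \<in> H n"
      obtain a where a: "a \<in> alg_gen \<phi> S" "m - a \<in> pos_span G \<phi>" using approx by blast
      obtain La where La: "homogeneous_list H La" "a = hsum La" "\<forall>p\<in>set La. fst p \<in> alg_gen \<phi> S"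
        using alg_gen_homogeneous_decomposition[OF alg hom a(1)] by blast
      obtain Lp where Lp: "homogeneous_list H Lp" "m - a = hsum Lp"
        "\<forall>p\<in>set Lp. \<exists>r m e. fst p = \<phi> r * m \<and> m \<in> H e \<and> e < snd p"
        using pos_span_homogeneous_decomposition[OF alg a(2)] by blast
      have "m = hcomponent (La @ Lp) n"
        using La(1,2) Lp(1,2) m by (intro homogeneous_eq_hcomponent[OF gH]) (auto simp: algebra_simps)
      moreover have Lp_in: "fst p \<in> alg_gen \<phi> S" if p: "p \<in> set Lp" "snd p = n" for p
      proof -
        obtain r m' e where "fst p = \<phi> r * m'" "m' \<in> H e" "e < n"
          using Lp(3) p by blast
        then show ?thesis using less by (auto intro: alg_gen.mult alg_gen.scal)
      qed
      moreover have "\<forall>x\<in>set (map fst (filter (\<lambda>p. snd p = n) (La @ Lp))). x \<in> alg_gen \<phi> S"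
        using La(3) Lp_in by auto
      ultimately show "m \<in> alg_gen \<phi> S" using alg_gen_sum_list[OF h] by metis
    qed
  qed
  show ?thesis
  proof (intro set_eqI iffI UNIV_I)
    fix x
    obtain L where "homogeneous_list H L" "x = hsum L" using graded_decomposition[OF gH] .
    moreover from this(1) have "\<forall>y\<in>set (map fst L). y \<in> alg_gen \<phi> S"
      using homogeneous_in by (fastforce simp: homogeneous_list_def)
    ultimately show "x \<in> alg_gen \<phi> S" using alg_gen_sum_list[OF h] by metis
  qed
qed

definition formal_sum :: "('q \<Rightarrow> 'b::ring_1) \<Rightarrow> ('q \<Rightarrow> int) \<Rightarrow> 'b" where
  "formal_sum E f = (\<Sum>q\<in>{q. f q \<noteq> 0}. of_int (f q) * E q)"

lemma formal_sum_eq_sum: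
  "finite T \<Longrightarrow> {q. f q \<noteq> 0} \<subseteq> T \<Longrightarrow> formal_sum E f = (\<Sum>q\<in>T. of_int (f q) * E q)"
  unfolding formal_sum_def by (rule sum.mono_neutral_left) auto

lemma formal_sum_delta:
  shows finite_delta_support: "finite {q. delta p q \<noteq> 0}"
    and "formal_sum E (delta p) = E p"
proof -
  have supp: "{q. delta p q \<noteq> 0} = {p}" by (auto simp: delta_def)
  then show "finite {q. delta p q \<noteq> 0}" by simp
  show "formal_sum E (delta p) = E p" by (simp add: formal_sum_def supp delta_def)
qed

lemma formal_sum_add:
  assumes "finite {q. f q \<noteq> 0}" "finite {q. g q \<noteq> 0}"
  shows finite_add_support: "finite {q. f q + g q \<noteq> 0}"
    and "formal_sum E (\<lambda>q. f q + g q) = formal_sum E f + formal_sum E g"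
proof -
  let ?T = "{q. f q \<noteq> 0} \<union> {q. g q \<noteq> 0}"
  have "{q. f q + g q \<noteq> 0} \<subseteq> ?T" by auto
  then show "finite {q. f q + g q \<noteq> 0}" using assms by (rule finite_subset[OF _ finite_UnI])
  show "formal_sum E (\<lambda>q. f q + g q) = formal_sum E f + formal_sum E g"
    using assms \<open>{q. f q + g q \<noteq> 0} \<subseteq> ?T\<close>
    by (simp add: formal_sum_eq_sum[of ?T] distrib_right sum.distrib)
qed

lemma formal_sum_diff:
  assumes "finite {q. f q \<noteq> 0}" "finite {q. g q \<noteq> 0}"
  shows finite_diff_support: "finite {q. f q - g q \<noteq> 0}"
    and "formal_sum E (\<lambda>q. f q - g q) = formal_sum E f - formal_sum E g"
proof -
  let ?T = "{q. f q \<noteq> 0} \<union> {q. g q \<noteq> 0}"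
  have "{q. f q - g q \<noteq> 0} \<subseteq> ?T" by auto
  then show "finite {q. f q - g q \<noteq> 0}" using assms by (rule finite_subset[OF _ finite_UnI])
  show "formal_sum E (\<lambda>q. f q - g q) = formal_sum E f - formal_sum E g"
    using assms \<open>{q. f q - g q \<noteq> 0} \<subseteq> ?T\<close>
    by (simp add: formal_sum_eq_sum[of ?T] left_diff_distrib sum_subtractf)
qed

lemma formal_sum_sum_list_delta:
  shows finite_sum_list_delta_support: "finite {q. (\<Sum>p\<leftarrow>L. delta p q) \<noteq> 0}"
    and "formal_sum E (\<lambda>q. \<Sum>p\<leftarrow>L. delta p q) = (\<Sum>p\<leftarrow>L. E p)"
proof (induction L)
  case Nil
  { case 1 show ?case by simp }
  { case 2 show ?case by (simp add: formal_sum_def) }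
next
  case (Cons p L)
  { case 1 show ?case using finite_add_support[OF finite_delta_support Cons.IH(1)] by simp }
  { case 2 show ?case
      using formal_sum_add(2)[OF finite_delta_support Cons.IH(1), of E p] Cons.IH(2)
      by (simp add: formal_sum_delta) }
qed

lemma formal_sum_delta_diff:
  shows finite_delta_diff_support: "finite {q. delta a q - delta b q \<noteq> 0}"
    and "formal_sum E (\<lambda>q. delta a q - delta b q) = E a - E b"
  using formal_sum_diff[OF finite_delta_support finite_delta_support]
  by (simp_all add: formal_sum_delta)

lemma formal_sum_delta_diff2:
  shows finite_delta_diff2_support: "finite {q. delta a q - delta b q - delta c q \<noteq> 0}"
    and "formal_sum E (\<lambda>q. delta a q - delta b q - delta c q) = E a - E b - E c"
  using formal_sum_diff[OF finite_delta_diff_support finite_delta_support]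
  by (simp_all add: formal_sum_delta formal_sum_delta_diff)

lemma tensor_zero_formal_sum:
  fixes E :: "'r2::comm_ring_1 \<times> 'm1::ring_1 \<Rightarrow> 'b::ring_1"
  assumes zero: "0 \<in> P" and diff: "\<And>x y. x \<in> P \<Longrightarrow> y \<in> P \<Longrightarrow> x - y \<in> P"
    and add_left: "\<And>r r' m. E (r + r', m) - E (r, m) - E (r', m) \<in> P"
    and add_right: "\<And>r m m'. E (r, m + m') - E (r, m) - E (r, m') \<in> P"
    and scalar: "\<And>r s m. E (r * \<psi> s, m) - E (r, \<phi> s * m) \<in> P"
    and "f \<in> tensor_zero \<psi> \<phi>"
  shows "finite {q. f q \<noteq> 0} \<and> formal_sum E f \<in> P"
  using assms(6)
proof (induction rule: tensor_zero.induct)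
  case zero
  then show ?case by (simp add: formal_sum_def assms(1))
next
  case (diff f g)
  then show ?case using finite_diff_support[of f g] formal_sum_diff(2)[of f g E] assms(2) by metis
qed (use add_left add_right scalar finite_delta_diff_support finite_delta_diff2_support
  in \<open>simp_all add: formal_sum_delta_diff formal_sum_delta_diff2\<close>)

lemma pos_span_sum_list:
  "\<forall>p\<in>set L. fst p \<in> pos_part G \<Longrightarrow> (\<Sum>p\<leftarrow>L. \<phi> (fst p) * snd p) \<in> pos_span G \<phi>"
  by (induction L) (auto intro: pos_span.intros)

text \<open>A set-theoretic inverse \<open>\<rho>\<close> of the isomorphism \<open>R\<^sub>1/R\<^sub>1\<^sup>+ \<cong> R\<^sub>2/R\<^sub>2\<^sup>+\<close> induced by \<open>\<psi>\<close>; it is a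
  ring homomorphism modulo \<open>R\<^sub>1\<^sup>+\<close>.\<close>
lemma pos_part_quotient_section:
  fixes \<psi> :: "'r1::comm_ring_1 \<Rightarrow> 'r2::comm_ring_1"
  assumes gG1: "graded G1" and gG2: "graded G2" and hom: "rhom \<psi>"
    and inj: "\<forall>r. \<psi> r \<in> pos_part G2 \<longleftrightarrow> r \<in> pos_part G1"
    and surj: "\<forall>s. \<exists>r. s - \<psi> r \<in> pos_part G2"
  obtains \<rho> where "\<And>a b. \<rho> (a + b) - \<rho> a - \<rho> b \<in> pos_part G1"
    and "\<And>r s. \<rho> (r * \<psi> s) - \<rho> r * s \<in> pos_part G1"
    and "1 - \<rho> 1 \<in> pos_part G1"
    and "\<And>s. s \<in> pos_part G2 \<Longrightarrow> \<rho> s \<in> pos_part G1"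
proof
  define \<rho> where "\<rho> s = (SOME r. s - \<psi> r \<in> pos_part G2)" for s
  have \<rho>: "s - \<psi> (\<rho> s) \<in> pos_part G2" for s
    unfolding \<rho>_def by (rule someI_ex) (use surj in blast)
  show "\<rho> (a + b) - \<rho> a - \<rho> b \<in> pos_part G1" for a b
  proof -
    have "\<psi> (\<rho> (a + b) - \<rho> a - \<rho> b) = - ((a + b - \<psi> (\<rho> (a + b))) - (a - \<psi> (\<rho> a)) - (b - \<psi> (\<rho> b)))"
      by (simp add: rhom_diff[OF hom] rhom_add[OF hom] algebra_simps)
    also have "\<dots> \<in> pos_part G2"
      by (intro pos_part_uminus pos_part_diff \<rho> gG2)
    finally show ?thesis using inj by blast
  qed
  show "\<rho> (r * \<psi> s) - \<rho> r * s \<in> pos_part G1" for r s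
  proof -
    have "\<psi> (\<rho> (r * \<psi> s) - \<rho> r * s) = - ((r * \<psi> s - \<psi> (\<rho> (r * \<psi> s))) - \<psi> s * (r - \<psi> (\<rho> r)))"
      by (simp add: rhom_diff[OF hom] rhom_mult[OF hom] algebra_simps)
    also have "\<dots> \<in> pos_part G2"
      by (intro pos_part_uminus pos_part_diff pos_part_mult \<rho> gG2)
    finally show ?thesis using inj by blast
  qed
  show "1 - \<rho> 1 \<in> pos_part G1"
    using \<rho>[of 1] inj by (metis rhom_diff[OF hom] rhom_one[OF hom])
  show "\<rho> s \<in> pos_part G1" if "s \<in> pos_part G2" for s
  proof -
    have "\<psi> (\<rho> s) = s - (s - \<psi> (\<rho> s))" by simp
    also have "\<dots> \<in> pos_part G2" by (intro pos_part_diff gG2 that \<rho>)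
    finally show ?thesis using inj by blast
  qed
qed

lemma base_change_pos_span:
  fixes \<phi>2 :: "'r2::comm_ring_1 \<Rightarrow> 'm2::ring_1" and \<psi>s :: "'m1 \<Rightarrow> 'm2"
  assumes gG2: "graded G2" and h2: "rhom \<phi>2"
    and span: "\<And>m. \<exists>S. finite S \<and> m = (\<Sum>p\<in>S. \<phi>2 (fst p) * \<psi>s (snd p))"
    and "y \<in> pos_span G2 \<phi>2"
  shows "\<exists>L. (\<forall>p\<in>set L. fst p \<in> pos_part G2) \<and> y = (\<Sum>p\<leftarrow>L. \<phi>2 (fst p) * \<psi>s (snd p))"
  using assms(4)
proof (induction rule: pos_span.induct)
  case zero
  show ?case by (intro exI[of _ "[]"]) simp
next
  case (add r x m)
  then obtain L where L: "\<forall>p\<in>set L. fst p \<in> pos_part G2" "x = (\<Sum>p\<leftarrow>L. \<phi>2 (fst p) * \<psi>s (snd p))"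
    by blast
  obtain S where "finite S" "m = (\<Sum>p\<in>S. \<phi>2 (fst p) * \<psi>s (snd p))" using span by blast
  then obtain xs where xs: "m = (\<Sum>p\<leftarrow>xs. \<phi>2 (fst p) * \<psi>s (snd p))"
    using finite_distinct_list sum.distinct_set_conv_list by metis
  let ?L = "map (\<lambda>p. (r * fst p, snd p)) xs"
  have "\<phi>2 r * m = (\<Sum>p\<leftarrow>?L. \<phi>2 (fst p) * \<psi>s (snd p))"
    unfolding xs by (induction xs) (simp_all add: distrib_left rhom_mult[OF h2] mult.assoc)
  moreover have "\<forall>p\<in>set ?L. fst p \<in> pos_part G2"
    using pos_part_mult[OF gG2 add.hyps(1)] by (auto simp: mult.commute)
  ultimately show ?case using L by (intro exI[of _ "?L @ L"]) auto
qed

lemma base_changeD: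
  assumes "base_change \<psi> \<phi>1 \<phi>2 \<psi>s"
  shows "rhom \<psi>s" and "\<psi>s (\<phi>1 s * m) = \<phi>2 (\<psi> s) * \<psi>s m"
    and "\<exists>S. finite S \<and> m2 = (\<Sum>p\<in>S. \<phi>2 (fst p) * \<psi>s (snd p))"
    and "finite {q. f q \<noteq> 0} \<Longrightarrow> formal_sum (\<lambda>q. \<phi>2 (fst q) * \<psi>s (snd q)) f = 0
      \<Longrightarrow> f \<in> tensor_zero \<psi> \<phi>1"
  using assms by (simp_all add: base_change_def formal_sum_def)

text \<open>The inverse of \<open>M\<^sub>1/R\<^sub>1\<^sup>+M\<^sub>1 \<rightarrow> M\<^sub>2/R\<^sub>2\<^sup>+M\<^sub>2\<close> is \<open>r \<otimes> m \<mapsto> \<rho> r * m\<close>, well defined modulo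
  \<open>R\<^sub>1\<^sup>+M\<^sub>1\<close> by \<open>tensor_zero_formal_sum\<close>; applied to \<open>1 \<otimes> x\<close> it shows \<open>x \<in> R\<^sub>1\<^sup>+M\<^sub>1\<close>.\<close>
lemma base_change_reflects_pos_span:
  fixes \<psi> :: "'r1::comm_ring_1 \<Rightarrow> 'r2::comm_ring_1"
    and \<phi>1 :: "'r1 \<Rightarrow> 'm1::ring_1" and \<phi>2 :: "'r2 \<Rightarrow> 'm2::ring_1"
  assumes gG1: "graded G1" and gG2: "graded G2"
    and h1: "rhom \<phi>1" and h2: "rhom \<phi>2" and hom: "rhom \<psi>"
    and bc: "base_change \<psi> \<phi>1 \<phi>2 \<psi>s"
    and inj: "\<forall>r. \<psi> r \<in> pos_part G2 \<longleftrightarrow> r \<in> pos_part G1"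
    and surj: "\<forall>s. \<exists>r. s - \<psi> r \<in> pos_part G2"
    and "\<psi>s x \<in> pos_span G2 \<phi>2"
  shows "x \<in> pos_span G1 \<phi>1"
proof -
  obtain \<rho> where
        \<rho>_add: "\<And>a b. \<rho> (a + b) - \<rho> a - \<rho> b \<in> pos_part G1"
    and \<rho>_scalar: "\<And>r s. \<rho> (r * \<psi> s) - \<rho> r * s \<in> pos_part G1"
    and \<rho>_one: "1 - \<rho> 1 \<in> pos_part G1"
    and \<rho>_pos: "\<And>s. s \<in> pos_part G2 \<Longrightarrow> \<rho> s \<in> pos_part G1"
    using pos_part_quotient_section[OF gG1 gG2 hom inj surj] by blast
  define E where "E q = \<phi>1 (\<rho> (fst q)) * snd q" for q
  define E2 where "E2 q = \<phi>2 (fst q) * \<psi>s (snd q)" for q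
  have tensor_zero_E: "formal_sum E f \<in> pos_span G1 \<phi>1" if "f \<in> tensor_zero \<psi> \<phi>1" for f
  proof (rule conjunct2[OF tensor_zero_formal_sum[OF pos_span.zero _ _ _ _ that]])
    show "x - y \<in> pos_span G1 \<phi>1" if "x \<in> pos_span G1 \<phi>1" "y \<in> pos_span G1 \<phi>1" for x y
      using pos_span_diff[OF gG1 h1 that] .
    show "E (r + r', m) - E (r, m) - E (r', m) \<in> pos_span G1 \<phi>1" for r r' m
      using pos_span_scaled[OF \<rho>_add, where \<phi>=\<phi>1 and m=m]
      by (simp add: E_def rhom_diff[OF h1] rhom_add[OF h1] algebra_simps)
    show "E (r, m + m') - E (r, m) - E (r, m') \<in> pos_span G1 \<phi>1" for r m m'
      by (simp add: E_def distrib_left pos_span.zero)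
    show "E (r * \<psi> s, m) - E (r, \<phi>1 s * m) \<in> pos_span G1 \<phi>1" for r s m
      using pos_span_scaled[OF \<rho>_scalar, where \<phi>=\<phi>1 and m=m]
      by (simp add: E_def rhom_diff[OF h1] rhom_mult[OF h1] left_diff_distrib mult.assoc)
  qed
  obtain L where L: "\<forall>p\<in>set L. fst p \<in> pos_part G2" "\<psi>s x = (\<Sum>p\<leftarrow>L. E2 p)"
    using base_change_pos_span[OF gG2 h2 base_changeD(3)[OF bc] assms(9)]
    unfolding E2_def by blast
  define F where "F q = delta (1, x) q - (\<Sum>p\<leftarrow>L. delta p q)" for q
  have F_fin: "finite {q. F q \<noteq> 0}"
    unfolding F_def by (rule finite_diff_support[OF finite_delta_support finite_sum_list_delta_support])
  have F_sum: "formal_sum E' F = E' (1, x) - (\<Sum>p\<leftarrow>L. E' p)" for E' :: "_ \<Rightarrow> 'b::ring_1"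
    unfolding F_def
    by (simp add: formal_sum_diff[OF finite_delta_support finite_sum_list_delta_support]
        formal_sum_delta formal_sum_sum_list_delta)
  have "formal_sum E2 F = 0"
    using L(2) by (simp add: F_sum E2_def rhom_one[OF h2])
  then have "F \<in> tensor_zero \<psi> \<phi>1"
    using base_changeD(4)[OF bc F_fin] unfolding E2_def by blast
  then have "E (1, x) - (\<Sum>p\<leftarrow>L. E p) \<in> pos_span G1 \<phi>1"
    using tensor_zero_E F_sum by metis
  then have lifted: "\<phi>1 (\<rho> 1) * x - (\<Sum>p\<leftarrow>L. E p) \<in> pos_span G1 \<phi>1"
    by (simp add: E_def)
  have "(\<Sum>p\<leftarrow>L. E p) \<in> pos_span G1 \<phi>1"
    using pos_span_sum_list[of "map (\<lambda>p. (\<rho> (fst p), snd p)) L" G1 \<phi>1] L(1) \<rho>_pos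
    by (simp add: E_def o_def)
  then have "\<phi>1 (\<rho> 1) * x - (\<Sum>p\<leftarrow>L. E p) + (\<Sum>p\<leftarrow>L. E p) + \<phi>1 (1 - \<rho> 1) * x \<in> pos_span G1 \<phi>1"
    by (intro pos_span_add lifted pos_span_scaled[OF \<rho>_one])
  then show ?thesis by (simp add: rhom_diff[OF h1] rhom_one[OF h1] algebra_simps)
qed

lemma alg_gen_lift_mod_pos_span:
  fixes \<psi> :: "'r1::comm_ring_1 \<Rightarrow> 'r2::comm_ring_1"
    and \<phi>1 :: "'r1 \<Rightarrow> 'm1::ring_1" and \<phi>2 :: "'r2 \<Rightarrow> 'm2::ring_1"
  assumes h2: "rhom \<phi>2" and central: "\<And>r m. \<phi>2 r * m = m * \<phi>2 r"
    and hs: "rhom \<psi>s" and linear: "\<And>s m. \<psi>s (\<phi>1 s * m) = \<phi>2 (\<psi> s) * \<psi>s m"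
    and surj: "\<forall>s. \<exists>r. s - \<psi> r \<in> pos_part G2"
    and "z \<in> alg_gen \<phi>2 (\<psi>s ` S)"
  shows "\<exists>a\<in>alg_gen \<phi>1 S. z - \<psi>s a \<in> pos_span G2 \<phi>2"
  using assms(6)
proof (induction rule: alg_gen.induct)
  case (scal r)
  obtain r' where r': "r - \<psi> r' \<in> pos_part G2" using surj by blast
  have "\<psi>s (\<phi>1 r') = \<phi>2 (\<psi> r')" using linear[of r' 1] by (simp add: rhom_one[OF hs])
  then have "\<phi>2 r - \<psi>s (\<phi>1 r') = \<phi>2 (r - \<psi> r') * 1" by (simp add: rhom_diff[OF h2])
  also have "\<dots> \<in> pos_span G2 \<phi>2" by (rule pos_span_scaled[OF r'])
  finally show ?case by (blast intro: alg_gen.scal)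
next
  case (gen x)
  then obtain s where "s \<in> S" "x = \<psi>s s" by blast
  then show ?case by (auto intro!: bexI[of _ s] alg_gen.gen pos_span.zero)
next
  case (add x y)
  then obtain a b where a: "a \<in> alg_gen \<phi>1 S" "x - \<psi>s a \<in> pos_span G2 \<phi>2"
    and b: "b \<in> alg_gen \<phi>1 S" "y - \<psi>s b \<in> pos_span G2 \<phi>2" by blast
  have "x + y - \<psi>s (a + b) = (x - \<psi>s a) + (y - \<psi>s b)" by (simp add: rhom_add[OF hs])
  also have "\<dots> \<in> pos_span G2 \<phi>2" by (rule pos_span_add[OF a(2) b(2)])
  finally show ?case using a(1) b(1) by (blast intro: alg_gen.add)
next
  case (mult x y)
  then obtain a b where a: "a \<in> alg_gen \<phi>1 S" "x - \<psi>s a \<in> pos_span G2 \<phi>2"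
    and b: "b \<in> alg_gen \<phi>1 S" "y - \<psi>s b \<in> pos_span G2 \<phi>2" by blast
  have "x * y - \<psi>s (a * b) = (x - \<psi>s a) * y + \<psi>s a * (y - \<psi>s b)"
    by (simp add: rhom_mult[OF hs] algebra_simps)
  also have "\<dots> \<in> pos_span G2 \<phi>2"
    by (rule pos_span_add[OF pos_span_mult_right[OF a(2)] pos_span_mult_left[OF central b(2)]])
  finally show ?case using a(1) b(1) by (blast intro: alg_gen.mult)
qed

theorem proposition2p2:
  fixes \<psi> :: "'r1::comm_ring_1 \<Rightarrow> 'r2::comm_ring_1"
    and \<phi>1 :: "'r1 \<Rightarrow> 'm1::ring_1" and \<phi>2 :: "'r2 \<Rightarrow> 'm2::ring_1"
    and \<psi>s :: "'m1 \<Rightarrow> 'm2"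
    and G1 :: "nat \<Rightarrow> 'r1 set" and G2 :: "nat \<Rightarrow> 'r2 set"
    and H1 :: "nat \<Rightarrow> 'm1 set" and H2 :: "nat \<Rightarrow> 'm2 set"
    and g :: "'l \<Rightarrow> 'm2" and gt :: "'l \<Rightarrow> 'm1"
  assumes alg1: "graded_algebra G1 \<phi>1 H1"
    and alg2: "graded_algebra G2 \<phi>2 H2"
    and psi_hom: "rhom \<psi>" and psi_graded: "\<forall>n. \<psi> ` G1 n \<subseteq> G2 n"
    and free: "free_module \<phi>1"
    and tensor: "base_change \<psi> \<phi>1 \<phi>2 \<psi>s"
    and psis_graded: "\<forall>n. \<psi>s ` H1 n \<subseteq> H2 n"
    and quot_inj: "\<forall>r. \<psi> r \<in> pos_part G2 \<longleftrightarrow> r \<in> pos_part G1"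
    and quot_surj: "\<forall>s. \<exists>r. s - \<psi> r \<in> pos_part G2"
    and gens: "alg_gen \<phi>2 (range g) = UNIV"
    and g_hom: "\<forall>l. homogeneous H2 (g l)"
    and gt_hom: "\<forall>l. homogeneous H1 (gt l)"
    and lift: "\<forall>l. \<psi>s (gt l) = g l"
  shows "alg_gen \<phi>1 (range gt) = UNIV"
proof (rule graded_nakayama[OF alg1])
  show "\<forall>s\<in>range gt. homogeneous H1 s" using gt_hom by blast
  fix m
  note hs = base_changeD(1)[OF tensor]
  have "\<psi>s ` range gt = range g" using lift by (auto simp: image_image)
  then have "\<psi>s m \<in> alg_gen \<phi>2 (\<psi>s ` range gt)" using gens by simp
  then obtain a where a: "a \<in> alg_gen \<phi>1 (range gt)" "\<psi>s m - \<psi>s a \<in> pos_span G2 \<phi>2"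
    using alg_gen_lift_mod_pos_span[OF graded_algebraD(3,4)[OF alg2] hs base_changeD(2)[OF tensor] quot_surj]
    by blast
  have "m - a \<in> pos_span G1 \<phi>1"
    using a(2) base_change_reflects_pos_span[OF graded_algebraD(1)[OF alg1] graded_algebraD(1)[OF alg2]
        graded_algebraD(3)[OF alg1] graded_algebraD(3)[OF alg2] psi_hom tensor quot_inj quot_surj]
    by (simp add: rhom_diff[OF hs])
  with a(1) show "\<exists>a\<in>alg_gen \<phi>1 (range gt). m - a \<in> pos_span G1 \<phi>1" by blast
qed

end
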